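(* Let $a<b$, $c<d$, and let $f:[a,b]\times[c,d]\to\mathbb{R}$ be convex on the coordinates. Let $n\in\mathbb{N}$ and set $x_k=a+k\frac{b-a}{n}$ and $y_k=c+k\frac{d-c}{n}$ for $k=0,1,\dots,n$. Then \begin{align*} &\frac{d-c}{2n}\sum_{k=1}^{n}\int_a^b f\Big(x, \frac{y_{k-1}+y_k}{2}\Big)dx + \frac{b-a}{2n}\sum_{k=1}^{n}\int_c^d f\Big(\frac{x_{k-1}+x_k}{2}, y\Big)dy\\ &\leq \int_a^b\int_c^d f(x, y)\,dx\,dy\\ &\leq \frac{d-c}{4n}\int_a^b \left[f(x, c) + f(x, d)\right] dx + \frac{b-a}{4n}\int_c^d \left[f(a, y) + f(b, y)\right] dy\\ &\quad+ \frac{d-c}{2n}\sum_{k=1}^{n-1}\int_a^b f(x, y_k)\,dx + \frac{b-a}{2n}\sum_{k=1}^{n-1}\int_c^d f(x_k, y)\,dy. \end{align*}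
   Context: A function $f:[a,b]\times[c,d]\to\mathbb{R}$ is called convex on the coordinates if for every $y\in[c,d]$ the partial map $u\mapsto f(u,y)$ is convex on $[a,b]$, and for every $x\in[a,b]$ the partial map $v\mapsto f(x,v)$ is convex on $[c,d]$. Empty sums (e.g. $\sum_{k=1}^{0}$) are zero. *)

theory Defs
  imports "HOL-Analysis.Analysis"
begin

definition convex_on_coordinates ::
  "real \<Rightarrow> real \<Rightarrow> real \<Rightarrow> real \<Rightarrow> (real \<Rightarrow> real \<Rightarrow> real) \<Rightarrow> bool" where
  "convex_on_coordinates a b c d f \<longleftrightarrow>
     (\<forall>y\<in>{c..d}. convex_on {a..b} (\<lambda>u. f u y)) \<and>
     (\<forall>x\<in>{a..b}. convex_on {c..d} (\<lambda>v. f x v))"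

end

theory Submission imports Defs begin

text \<open>
  On each cell of the uniform grid the one-dimensional Hermite--Hadamard inequality bounds the
  integral of a convex function between the midpoint rule and the trapezoid rule; summing over the
  cells gives the composite rules. Applying the composite rules in \<open>y\<close> for fixed \<open>x\<close> and
  integrating over \<open>x\<close>, and applying them to the convex function \<open>x \<mapsto> \<integral>\<^sub>c\<^sup>d f(x,y) dy\<close>,
  yields two lower and two upper bounds for the double integral; the theorem averages them.
\<close>

definition uniform_grid :: "real \<Rightarrow> real \<Rightarrow> nat \<Rightarrow> nat \<Rightarrow> real" where
  "uniform_grid p q n k = p + real k * (q - p) / real n"

lemma uniform_grid_0 [simp]: "uniform_grid p q n 0 = p"
  by (simp add: uniform_grid_def)

lemma uniform_grid_last: "n \<ge> 1 \<Longrightarrow> uniform_grid p q n n = q"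
  by (simp add: uniform_grid_def)

lemma uniform_grid_step: "k \<ge> 1 \<Longrightarrow> uniform_grid p q n k - uniform_grid p q n (k - 1) = (q - p) / real n"
  by (simp add: uniform_grid_def of_nat_diff algebra_simps add_divide_distrib diff_divide_distrib)

lemma uniform_grid_mono: "p \<le> q \<Longrightarrow> j \<le> k \<Longrightarrow> uniform_grid p q n j \<le> uniform_grid p q n k"
  unfolding uniform_grid_def by (intro add_left_mono divide_right_mono mult_right_mono) auto

lemma uniform_grid_in_Icc:
  assumes "p \<le> q" and "k \<le> n"
  shows "uniform_grid p q n k \<in> {p..q}"
proof -
  have "real k / real n \<le> 1"
    using assms(2) by (cases "n = 0") auto
  then have "real k / real n * (q - p) \<le> q - p"
    using assms(1) by (intro mult_left_le_one_le) auto
  then show ?thesis using assms(1) by (simp add: uniform_grid_def)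
qed

lemma convex_on_midpoint_le_reflect:
  fixes \<phi> :: "real \<Rightarrow> real"
  assumes cv: "convex_on {p..q} \<phi>" and x: "x \<in> {p..q}"
  shows "2 * \<phi> ((p + q) / 2) \<le> \<phi> x + \<phi> (p + q - x)"
proof -
  have e: "(1 - 1/2) *\<^sub>R x + (1/2) *\<^sub>R (p + q - x) = (p + q) / 2" by (simp add: field_simps)
  have "\<phi> ((p + q) / 2) \<le> (1 - 1/2) * \<phi> x + (1/2) * \<phi> (p + q - x)"
    unfolding e[symmetric] by (rule convex_onD[OF cv]) (use x in auto)
  then show ?thesis by simp
qed

text \<open>Convex functions are continuous only in the interior; integrability on the closed interval
  comes from boundedness, which the midpoint inequality supplies from below.\<close>

lemma convex_on_integrable_on_Icc:
  fixes \<phi> :: "real \<Rightarrow> real"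
  assumes cv: "convex_on {p..q} \<phi>" and pq: "p < q"
  shows "\<phi> integrable_on {p..q}"
proof -
  define M where "M = max (\<phi> p) (\<phi> q)"
  have up: "\<phi> x \<le> M" if "x \<in> {p..q}" for x
    using convex_on_le_max[OF cv that] M_def by simp
  have bd: "\<bar>\<phi> x\<bar> \<le> 2 * \<bar>M\<bar> + 2 * \<bar>\<phi> ((p + q) / 2)\<bar>" if x: "x \<in> {p..q}" for x
  proof -
    have "\<phi> (p + q - x) \<le> M" using x by (intro up) auto
    then show ?thesis
      using convex_on_midpoint_le_reflect[OF cv x] up[OF x] by linarith
  qed
  have "continuous_on {p<..<q} \<phi>"
    by (rule convex_on_continuous) (auto intro: convex_on_subset[OF cv])
  then have meas: "\<phi> \<in> borel_measurable (lebesgue_on {p<..<q})"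
    by (rule continuous_imp_measurable_on_sets_lebesgue) simp
  have "\<phi> integrable_on {p<..<q}"
    by (rule measurable_bounded_by_integrable_imp_integrable_real
          [OF meas, of "\<lambda>_. 2 * \<bar>M\<bar> + 2 * \<bar>\<phi> ((p + q) / 2)\<bar>"])
       (use bd in \<open>auto simp: integrable_on_open_interval_real\<close>)
  then show ?thesis by (simp add: integrable_on_open_interval_real)
qed

lemma has_integral_reflect_Icc:
  fixes \<phi> :: "real \<Rightarrow> real"
  assumes "\<phi> integrable_on {p..q}"
  shows "((\<lambda>x. \<phi> (p + q - x)) has_integral integral {p..q} \<phi>) {p..q}"
proof -
  have "((\<phi> \<circ> (+) (p + q)) has_integral integral {p..q} \<phi>) {-q..-p}"
    using has_integral_shift_Icc_real[of \<phi> "p + q" "integral {p..q} \<phi>" "-q" "-p"] assms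
    by (simp add: integrable_integral)
  then show ?thesis
    using has_integral_reflect_real[of "\<lambda>x. \<phi> (p + q + x)" "integral {p..q} \<phi>" "-p" "-q"]
    by (simp add: o_def)
qed

lemma hermite_hadamard_left:
  fixes \<phi> :: "real \<Rightarrow> real"
  assumes cv: "convex_on {p..q} \<phi>" and pq: "p < q"
  shows "(q - p) * \<phi> ((p + q) / 2) \<le> integral {p..q} \<phi>"
proof -
  have int: "\<phi> integrable_on {p..q}" by (rule convex_on_integrable_on_Icc[OF cv pq])
  note refl = has_integral_reflect_Icc[OF int]
  have "(q - p) * (2 * \<phi> ((p + q) / 2)) = integral {p..q} (\<lambda>x. 2 * \<phi> ((p + q) / 2))"
    using pq by simp
  also have "\<dots> \<le> integral {p..q} (\<lambda>x. \<phi> x + \<phi> (p + q - x))"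
    by (intro integral_le integrable_add int has_integral_integrable[OF refl]
          convex_on_midpoint_le_reflect[OF cv]) auto
  also have "\<dots> = 2 * integral {p..q} \<phi>"
    by (simp add: integral_add[OF int has_integral_integrable[OF refl]] integral_unique[OF refl])
  finally show ?thesis by simp
qed

text \<open>The chord from \<open>(p, \<phi> p)\<close> to \<open>(q, \<phi> q)\<close> lies above \<open>\<phi>\<close> and integrates to the trapezoid.\<close>

lemma hermite_hadamard_right:
  fixes \<phi> :: "real \<Rightarrow> real"
  assumes cv: "convex_on {p..q} \<phi>" and pq: "p < q"
  shows "integral {p..q} \<phi> \<le> (q - p) * (\<phi> p + \<phi> q) / 2"
proof -
  define sl where "sl = (\<phi> q - \<phi> p) / (q - p)"
  define F where "F x = sl * (x - p)^2 / 2 + \<phi> p * (x - p)" for x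
  have "((\<lambda>x. sl * (x - p) + \<phi> p) has_integral F q - F p) {p..q}"
    unfolding F_def
    by (rule fundamental_theorem_of_calculus)
       (use pq in \<open>auto intro!: derivative_eq_intros
          simp: has_real_derivative_iff_has_vector_derivative[symmetric] field_simps power2_eq_square\<close>)
  moreover have "F q - F p = (q - p) * (\<phi> p + \<phi> q) / 2"
    using pq by (simp add: F_def sl_def field_simps power2_eq_square)
  ultimately have chord: "((\<lambda>x. sl * (x - p) + \<phi> p) has_integral (q - p) * (\<phi> p + \<phi> q) / 2) {p..q}"
    by simp
  show ?thesis
    by (rule has_integral_le[OF integrable_integral[OF convex_on_integrable_on_Icc[OF cv pq]] chord])
       (use convex_onD_Icc'[OF cv] in \<open>simp add: sl_def\<close>)
qed

lemma sum_consecutive_pairs: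
  fixes g :: "nat \<Rightarrow> 'a::comm_ring_1"
  assumes "n \<ge> 1"
  shows "(\<Sum>k=1..n. g (k - 1) + g k) = g 0 + g n + 2 * (\<Sum>k=1..n-1. g k)"
  using assms
proof (induction n rule: dec_induct)
  case (step m)
  have "(\<Sum>k=1..Suc m. g (k - 1) + g k) = g 0 + g m + 2 * (\<Sum>k=1..m-1. g k) + (g m + g (Suc m))"
    using step by simp
  also have "\<dots> = g 0 + g (Suc m) + 2 * ((\<Sum>k=1..m-1. g k) + g m)"
    by (simp add: algebra_simps)
  also have "(\<Sum>k=1..m-1. g k) + g m = (\<Sum>k=1..Suc m - 1. g k)"
    using step(1) by (cases m) auto
  finally show ?case .
qed simp

lemma integral_uniform_grid_cells:
  fixes \<phi> :: "real \<Rightarrow> real"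
  assumes int: "\<phi> integrable_on {p..q}" and pq: "p \<le> q" and n: "n \<ge> 1"
  shows "integral {p..q} \<phi> = (\<Sum>k=1..n. integral {uniform_grid p q n (k - 1)..uniform_grid p q n k} \<phi>)"
proof -
  let ?t = "uniform_grid p q n"
  have "integral {p..?t m} \<phi> = (\<Sum>k=1..m. integral {?t (k - 1)..?t k} \<phi>)" if "m \<le> n" for m
    using that
  proof (induction m)
    case (Suc m)
    have sub: "{p..?t (Suc m)} \<subseteq> {p..q}"
      using uniform_grid_in_Icc[OF pq Suc.prems] by auto
    have "?t m \<le> ?t (Suc m)"
      using pq by (simp add: uniform_grid_mono)
    moreover have "p \<le> ?t m"
      using uniform_grid_in_Icc[OF pq, of m n] Suc.prems by simp
    ultimately have "integral {p..?t m} \<phi> + integral {?t m..?t (Suc m)} \<phi> = integral {p..?t (Suc m)} \<phi>"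
      by (intro Henstock_Kurzweil_Integration.integral_combine integrable_subinterval_real[OF int sub])
    with Suc show ?case by simp
  qed simp
  from this[of n] show ?thesis using n by (simp add: uniform_grid_last)
qed

lemma hermite_hadamard_uniform_grid:
  fixes \<phi> :: "real \<Rightarrow> real"
  assumes cv: "convex_on {p..q} \<phi>" and pq: "p < q" and n: "n \<ge> 1"
  defines "t \<equiv> uniform_grid p q n"
  shows "(q - p) / real n * (\<Sum>k=1..n. \<phi> ((t (k - 1) + t k) / 2)) \<le> integral {p..q} \<phi>"
    and "integral {p..q} \<phi> \<le> (q - p) / (2 * real n) * (\<phi> p + \<phi> q)
                               + (q - p) / real n * (\<Sum>k=1..n-1. \<phi> (t k))"
proof -
  define h where "h = (q - p) / real n"
  have cell: "h * \<phi> ((t (k - 1) + t k) / 2) \<le> integral {t (k - 1)..t k} \<phi>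
            \<and> integral {t (k - 1)..t k} \<phi> \<le> h * (\<phi> (t (k - 1)) + \<phi> (t k)) / 2"
    if k: "k \<in> {1..n}" for k
  proof -
    have step: "t k - t (k - 1) = h"
      using uniform_grid_step[of k p q n] k by (simp add: t_def h_def)
    have "{t (k - 1)..t k} \<subseteq> {p..q}"
      using uniform_grid_in_Icc[of p q k n] uniform_grid_in_Icc[of p q "k - 1" n] k pq
      by (auto simp: t_def)
    then have cvk: "convex_on {t (k - 1)..t k} \<phi>" by (rule convex_on_subset[OF cv]) simp
    have "0 < h" using pq n by (simp add: h_def)
    then have "t (k - 1) < t k" using step by linarith
    with step show ?thesis
      using hermite_hadamard_left[OF cvk] hermite_hadamard_right[OF cvk] by simp
  qed
  have cells: "integral {p..q} \<phi> = (\<Sum>k=1..n. integral {t (k - 1)..t k} \<phi>)"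
    unfolding t_def using convex_on_integrable_on_Icc[OF cv pq] pq n
    by (intro integral_uniform_grid_cells) auto
  have "(q - p) / real n * (\<Sum>k=1..n. \<phi> ((t (k - 1) + t k) / 2)) = (\<Sum>k=1..n. h * \<phi> ((t (k - 1) + t k) / 2))"
    by (simp add: h_def sum_distrib_left)
  also have "\<dots> \<le> integral {p..q} \<phi>"
    unfolding cells by (rule sum_mono) (use cell in blast)
  finally show "(q - p) / real n * (\<Sum>k=1..n. \<phi> ((t (k - 1) + t k) / 2)) \<le> integral {p..q} \<phi>" .
  have "integral {p..q} \<phi> \<le> (\<Sum>k=1..n. h * (\<phi> (t (k - 1)) + \<phi> (t k)) / 2)"
    unfolding cells by (rule sum_mono) (use cell in blast)
  also have "\<dots> = h / 2 * (\<Sum>k=1..n. \<phi> (t (k - 1)) + \<phi> (t k))"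
    by (simp add: sum_distrib_left sum_divide_distrib)
  also have "\<dots> = h / 2 * (\<phi> (t 0) + \<phi> (t n) + 2 * (\<Sum>k=1..n-1. \<phi> (t k)))"
    using sum_consecutive_pairs[OF n, of "\<lambda>k. \<phi> (t k)"] by (simp only:)
  also have "\<dots> = (q - p) / (2 * real n) * (\<phi> p + \<phi> q) + (q - p) / real n * (\<Sum>k=1..n-1. \<phi> (t k))"
    using n by (simp add: t_def uniform_grid_last h_def field_simps)
  finally show "integral {p..q} \<phi> \<le> (q - p) / (2 * real n) * (\<phi> p + \<phi> q)
                                    + (q - p) / real n * (\<Sum>k=1..n-1. \<phi> (t k))" .
qed

lemma convex_on_integral_parametric:
  fixes f :: "'a::real_vector \<Rightarrow> 'b::euclidean_space \<Rightarrow> real"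
  assumes cv: "\<And>y. y \<in> T \<Longrightarrow> convex_on S (\<lambda>x. f x y)"
    and int: "\<And>x. x \<in> S \<Longrightarrow> f x integrable_on T"
    and S: "convex S"
  shows "convex_on S (\<lambda>x. integral T (f x))"
  unfolding convex_on_def
proof (intro conjI S ballI allI impI)
  fix x1 x2 assume x1: "x1 \<in> S" and x2: "x2 \<in> S"
  fix u v :: real assume uv: "0 \<le> u" "0 \<le> v" "u + v = 1"
  have z: "u *\<^sub>R x1 + v *\<^sub>R x2 \<in> S"
    using convexD[OF S x1 x2 uv] .
  have "integral T (f (u *\<^sub>R x1 + v *\<^sub>R x2)) \<le> integral T (\<lambda>y. u * f x1 y + v * f x2 y)"
    using cv[unfolded convex_on_def] x1 x2 uv
    by (intro integral_le int z integrable_add integrable_on_mult_right) auto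
  also have "\<dots> = u * integral T (f x1) + v * integral T (f x2)"
    by (simp add: integral_add integrable_on_mult_right int x1 x2)
  finally show "integral T (f (u *\<^sub>R x1 + v *\<^sub>R x2)) \<le> u * integral T (f x1) + v * integral T (f x2)" .
qed

lemma hermite_hadamard_uniform_grid_inner:
  fixes f :: "real \<Rightarrow> real \<Rightarrow> real"
  assumes cv: "\<And>x. x \<in> {a..b} \<Longrightarrow> convex_on {c..d} (f x)"
    and int: "\<And>y. y \<in> {c..d} \<Longrightarrow> (\<lambda>x. f x y) integrable_on {a..b}"
    and int_outer: "(\<lambda>x. integral {c..d} (f x)) integrable_on {a..b}"
    and cd: "c < d" and n: "n \<ge> 1"
  defines "t \<equiv> uniform_grid c d n"
  shows "(d - c) / real n * (\<Sum>k=1..n. integral {a..b} (\<lambda>x. f x ((t (k - 1) + t k) / 2)))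
           \<le> integral {a..b} (\<lambda>x. integral {c..d} (f x))"
    and "integral {a..b} (\<lambda>x. integral {c..d} (f x))
           \<le> (d - c) / (2 * real n) * integral {a..b} (\<lambda>x. f x c + f x d)
             + (d - c) / real n * (\<Sum>k=1..n-1. integral {a..b} (\<lambda>x. f x (t k)))"
proof -
  have t_in: "t k \<in> {c..d}" if "k \<le> n" for k
    using uniform_grid_in_Icc[of c d k n] that cd by (simp add: t_def)
  have mid_in: "(t (k - 1) + t k) / 2 \<in> {c..d}" if "k \<in> {1..n}" for k
  proof -
    have "k - 1 \<le> n" "k \<le> n" using that by auto
    then show ?thesis using t_in[of k] t_in[of "k - 1"] by auto
  qed
  have int_mid: "(\<lambda>x. f x ((t (k - 1) + t k) / 2)) integrable_on {a..b}" if "k \<in> {1..n}" for k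
    using int[OF mid_in[OF that]] .
  have int_node: "(\<lambda>x. f x (t k)) integrable_on {a..b}" if "k \<in> {1..n-1}" for k
    using int[OF t_in] that by auto
  have int_ends: "(\<lambda>x. f x c + f x d) integrable_on {a..b}"
    using cd by (intro integrable_add int) auto
  have "(d - c) / real n * (\<Sum>k=1..n. integral {a..b} (\<lambda>x. f x ((t (k - 1) + t k) / 2)))
      = integral {a..b} (\<lambda>x. (d - c) / real n * (\<Sum>k=1..n. f x ((t (k - 1) + t k) / 2)))"
    by (subst integral_mult_right, subst integral_sum) (use int_mid in auto)
  also have "\<dots> \<le> integral {a..b} (\<lambda>x. integral {c..d} (f x))"
    using int_mid hermite_hadamard_uniform_grid(1)[OF cv cd n]
    by (intro integral_le int_outer integrable_on_mult_right integrable_sum) (auto simp: t_def)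
  finally show "(d - c) / real n * (\<Sum>k=1..n. integral {a..b} (\<lambda>x. f x ((t (k - 1) + t k) / 2)))
      \<le> integral {a..b} (\<lambda>x. integral {c..d} (f x))" .
  have int_ends': "(\<lambda>x. (d - c) / (2 * real n) * (f x c + f x d)) integrable_on {a..b}"
    using int_ends by (rule integrable_on_mult_right)
  have int_nodes: "(\<lambda>x. (d - c) / real n * (\<Sum>k=1..n-1. f x (t k))) integrable_on {a..b}"
    by (intro integrable_on_mult_right integrable_sum) (use int_node in auto)
  have "integral {a..b} (\<lambda>x. integral {c..d} (f x))
      \<le> integral {a..b} (\<lambda>x. (d - c) / (2 * real n) * (f x c + f x d)
                               + (d - c) / real n * (\<Sum>k=1..n-1. f x (t k)))"
    using hermite_hadamard_uniform_grid(2)[OF cv cd n]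
    by (intro integral_le int_outer integrable_add int_ends' int_nodes) (auto simp: t_def)
  also have "\<dots> = (d - c) / (2 * real n) * integral {a..b} (\<lambda>x. f x c + f x d)
                  + (d - c) / real n * (\<Sum>k=1..n-1. integral {a..b} (\<lambda>x. f x (t k)))"
    unfolding integral_add[OF int_ends' int_nodes] integral_mult_right
    by (subst integral_sum) (use int_node in auto)
  finally show "integral {a..b} (\<lambda>x. integral {c..d} (f x))
      \<le> (d - c) / (2 * real n) * integral {a..b} (\<lambda>x. f x c + f x d)
        + (d - c) / real n * (\<Sum>k=1..n-1. integral {a..b} (\<lambda>x. f x (t k)))" .
qed

theorem theorem3:
  fixes a b c d :: real and f :: "real \<Rightarrow> real \<Rightarrow> real" and n :: nat
  assumes "a < b" and "c < d"
    and "convex_on_coordinates a b c d f"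
    and "n \<ge> 1"
  defines "xk \<equiv> (\<lambda>k::nat. a + real k * (b - a) / real n)"
    and "yk \<equiv> (\<lambda>k::nat. c + real k * (d - c) / real n)"
  shows
    "((d - c) / (2 * real n) * (\<Sum>k=1..n. integral {a..b} (\<lambda>x. f x ((yk (k - 1) + yk k) / 2)))
     + (b - a) / (2 * real n) * (\<Sum>k=1..n. integral {c..d} (\<lambda>y. f ((xk (k - 1) + xk k) / 2) y))
     \<le> integral {a..b} (\<lambda>x. integral {c..d} (\<lambda>y. f x y))
   \<and> integral {a..b} (\<lambda>x. integral {c..d} (\<lambda>y. f x y))
     \<le> (d - c) / (4 * real n) * integral {a..b} (\<lambda>x. f x c + f x d)
       + (b - a) / (4 * real n) * integral {c..d} (\<lambda>y. f a y + f b y)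
       + (d - c) / (2 * real n) * (\<Sum>k=1..n-1. integral {a..b} (\<lambda>x. f x (yk k)))
       + (b - a) / (2 * real n) * (\<Sum>k=1..n-1. integral {c..d} (\<lambda>y. f (xk k) y)))"
proof -
  note ab = \<open>a < b\<close> and cd = \<open>c < d\<close> and n = \<open>n \<ge> 1\<close>
  have cv_x: "\<And>y. y \<in> {c..d} \<Longrightarrow> convex_on {a..b} (\<lambda>x. f x y)"
    and cv_y: "\<And>x. x \<in> {a..b} \<Longrightarrow> convex_on {c..d} (f x)"
    using \<open>convex_on_coordinates a b c d f\<close> unfolding convex_on_coordinates_def by auto
  define g where "g x = integral {c..d} (f x)" for x
  have cv_g: "convex_on {a..b} g"
    unfolding g_def using cv_x convex_on_integrable_on_Icc[OF cv_y cd]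
    by (intro convex_on_integral_parametric) auto
  have int_x: "\<And>y. y \<in> {c..d} \<Longrightarrow> (\<lambda>x. f x y) integrable_on {a..b}"
    using convex_on_integrable_on_Icc[OF cv_x ab] .
  note inner = hermite_hadamard_uniform_grid_inner[OF cv_y int_x
      convex_on_integrable_on_Icc[OF cv_g ab, unfolded g_def] cd n]
  note outer = hermite_hadamard_uniform_grid[OF cv_g ab n]
  have "g a + g b = integral {c..d} (\<lambda>y. f a y + f b y)"
    unfolding g_def using ab by (intro integral_add[symmetric] convex_on_integrable_on_Icc[OF cv_y cd]) auto
  moreover have "xk = uniform_grid a b n" "yk = uniform_grid c d n"
    unfolding xk_def yk_def uniform_grid_def by auto
  ultimately show ?thesis
    using inner outer unfolding g_def by (auto simp: field_simps)
qed

end
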